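(* For every $n\ge0$, the normalized median Genocchi number satisfies $$h_n=\sum_{\mathbf f\in M_n}\prod_{k=0}^{n-1}w(f_k,f_{k+1}),$$ where $w(k,k)=\gamma_k$, $w(k,k+1)=\alpha_k$, $w(k,k-1)=\beta_{k-1}$ with $\alpha_m=\beta_m=\frac{(m+1)(m+2)}{2}$ and $\gamma_m=(m+1)^2$. Moreover, as formal power series, $$\sum_{n\ge0}h_ns^n=\cfrac{1}{1-\cfrac{s}{1-\cfrac{s}{1-\cfrac{3s}{1-\cfrac{3s}{1-\cfrac{6s}{1-\cfrac{6s}{1-\cfrac{10s}{1-\cdots}}}}}}}},$$ where the partial numerators are $d_{2m-1}s=d_{2m}s=\binom{m+1}{2}s$ for $m\ge1$.
   Context: $M_n$ denotes the set of Motzkin paths of length $n$: sequences $\mathbf f=(f_0,\dots,f_n)$ of nonnegative integers with $f_0=f_n=0$ and $|f_{k+1}-f_k|\le1$. The normalized median Genocchi numbers are $h_n=H_{2n+1}/2^n$ ($h_0,h_1,h_2,\dots=1,1,2,7,38,295,\dots$), where the median Genocchi numbers $H_{2n-1}=g_{1,2n}$ come from the Seidel triangle: numbers $g_{k,m}$, $m\ge1$, $1\le k\le (m+1)/2$, with $g_{1,1}=1$, $g_{k,2m}=\sum_{i\ge k}g_{i,2m-1}$, $g_{k,2m+1}=\sum_{i\le k}g_{i,2m}$. It is known that $h_n=h_n(1)$, where $h_n(q)$ is the Poincaré polynomial (in $q=t^2$) of the degenerate flag variety $\mathrm{Fl}^a_n$ (tuples $(V_1,\dots,V_{n-1})$ of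 subspaces of $\mathbb C^n$ with basis $w_1,\dots,w_n$, $\dim V_k=k$, $pr_{k+1}V_k\subset V_{k+1}$, $pr_k$ killing the $w_k$-coordinate), and that $h_n(q)=\sum_{f_1,\dots,f_{n-1}\ge 0} q^{\sum_{k=1}^{n-1}(k-f_k)(1-f_k+f_{k+1})}\prod_{k=1}^{n-1}\binom{1+f_{k-1}}{f_k}_{q}\binom{1+f_{k+1}}{f_k}_{q}$ with $f_0=f_n=0$, Gaussian binomials $\binom{m}{k}_q$ (zero unless $0\le k\le m$). *)

theory Defs
  imports "HOL-Computational_Algebra.Formal_Power_Series"
begin

text \<open>Seidel triangle: seidel m k = g_{k,m}, zero outside 1 <= k <= (m+1)/2.\<close>
fun seidel :: "nat \<Rightarrow> nat \<Rightarrow> nat" where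
  "seidel 0 k = 0"
| "seidel (Suc 0) k = (if k = 1 then 1 else 0)"
| "seidel (Suc (Suc m)) k =
     (if k < 1 \<or> k > (m + 3) div 2 then 0
      else if even (Suc (Suc m)) then (\<Sum>i\<in>{k..(m + 2) div 2}. seidel (Suc m) i)
      else (\<Sum>i\<in>{1..k}. seidel (Suc m) i))"

text \<open>Median Genocchi number H_{2n-1} = g_{1,2n}.\<close>
definition median_genocchi :: "nat \<Rightarrow> nat" where
  "median_genocchi n = seidel (2 * n) 1"

text \<open>Normalized median Genocchi number h_n = H_{2n+1} / 2^n = g_{1,2n+2} / 2^n.\<close>
definition hnorm :: "nat \<Rightarrow> rat" where
  "hnorm n = of_nat (median_genocchi (n + 1)) / 2 ^ n"

text \<open>Motzkin paths of length n, as functions nat => nat vanishing beyond n.\<close>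
definition motzkin :: "nat \<Rightarrow> (nat \<Rightarrow> nat) set" where
  "motzkin n = {f. f 0 = 0 \<and> f n = 0 \<and>
      (\<forall>k<n. f (Suc k) \<le> f k + 1 \<and> f k \<le> f (Suc k) + 1) \<and> (\<forall>k>n. f k = 0)}"

definition alpha :: "nat \<Rightarrow> nat" where "alpha m = (m + 1) * (m + 2) div 2"
definition beta  :: "nat \<Rightarrow> nat" where "beta m = (m + 1) * (m + 2) div 2"
definition gamma :: "nat \<Rightarrow> nat" where "gamma m = (m + 1)^2"

definition wt :: "nat \<Rightarrow> nat \<Rightarrow> nat" where
  "wt a b = (if b = a then gamma a
             else if b = a + 1 then alpha a
             else if a = b + 1 then beta b else 0)"

text \<open>Partial numerator coefficients: d_{2m-1} = d_{2m} = binom(m+1,2), m >= 1.\<close>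
definition dcf :: "nat \<Rightarrow> nat" where
  "dcf j = ((j + 1) div 2 + 1) choose 2"

fun cf :: "nat \<Rightarrow> nat \<Rightarrow> rat fps" where
  "cf j 0 = 1"
| "cf j (Suc N) = inverse (1 - fps_const (of_nat (dcf j)) * fps_X * cf (Suc j) N)"

end

theory Submission
  imports Defs
begin

(*
  Every row of the Seidel triangle is an alternating binomial sum of
     M_0 = 1, M_p = H_{2p-1}; the vanishing of row 2n+2 beyond its support gives the
     recurrence M_{n+1} = sum_i (-1)^i C(n+2+i,2i+2) M_{n-i}.
  2. Motzkin paths.  The weighted number A(n,j) of paths of length n ending at height j
     satisfies the transfer recursion; A(n,0) is the path sum of the statement.
  3. Continued fraction.  The normalised series of A(n+j,j) and A(n+j,j)+A(n+j,j+1)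
     satisfy the contraction relations s_{k+1} = s_k + d_{k+1} X s_{k+2}; their ratios are
     the tails of the continued fraction, so the truncations converge coefficientwise.
  4. Expansion.  With c_m = C(m+1,2) and P_m = c_1 ... c_m one has
     A(n,j) = sum_m C(m,j) P_m B(n,m), where sum_n B(n,m) t^n = t^m / prod_{k<=m} (1 + c_k t).
  5. Generating functions.  The substitution t = -2X^2/(1-X) factors 1 + c_k t into linear
     factors; after taking even parts a telescoping sum shows that 2^n A(n,0) satisfies the
     recurrence of M_{n+1}.  Hence h_n = A(n,0), which gives both claims.
*)

unbundle fps_syntax

text \<open>The recursive clause of the Seidel triangle is only unfolded at explicitly chosen rows.\<close>
declare seidel.simps(3)[simp del]

text \<open>
  The sequence M_0 = 1, M_p = H_{2p-1} (p \<ge> 1); then h_n = M_{n+1} / 2^n.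
\<close>
definition med :: "nat \<Rightarrow> int" where
  "med p = (if p = 0 then 1 else int (seidel (2*p) 1))"

text \<open>
  Closed forms of the rows of the Seidel triangle in terms of M: entry k of row 2n+2
  is even_row n k, entry k of row 2n+1 is odd_row n k.
\<close>
definition even_row :: "nat \<Rightarrow> nat \<Rightarrow> int" where
  "even_row n k = med (n+1) - (\<Sum>i\<le>n. (-1)^i * int ((k+i) choose (2*i+2)) * med (n-i))"

definition odd_row :: "nat \<Rightarrow> nat \<Rightarrow> int" where
  "odd_row n k = (\<Sum>i\<le>n. (-1)^i * int ((k+i) choose (2*i+1)) * med (n-i))"

text \<open>Pascal's rule turns the odd-row formula into a difference of even-row formulas \<dots>\<close>
lemma odd_row_diff: "odd_row n k = even_row n k - even_row n (Suc k)"
proof -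
  have "even_row n k - even_row n (Suc k)
        = (\<Sum>i\<le>n. (-1)^i * int ((Suc k+i) choose (2*i+2)) * med (n-i))
          - (\<Sum>i\<le>n. (-1)^i * int ((k+i) choose (2*i+2)) * med (n-i))"
    by (simp add: even_row_def)
  also have "\<dots> = odd_row n k"
    unfolding odd_row_def sum_subtractf[symmetric]
    by (intro sum.cong) (simp_all add: algebra_simps)
  finally show ?thesis by simp
qed

text \<open>\<dots> and an even-row formula into a difference of odd-row formulas one level higher.\<close>
lemma odd_row_step: "odd_row (Suc n) (Suc k) = odd_row (Suc n) k + even_row n (Suc k)"
proof -
  have "odd_row (Suc n) (Suc k) - odd_row (Suc n) k =
     (\<Sum>i\<le>Suc n. (-1)^i * int ((k+i) choose (2*i)) * med (Suc n-i))"
    unfolding odd_row_def sum_subtractf[symmetric]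
    by (intro sum.cong) (simp_all add: algebra_simps)
  also have "\<dots> = med (Suc n) + (\<Sum>i\<le>n. (-1)^(Suc i) * int ((k+Suc i) choose (2*Suc i)) * med (n - i))"
    by (subst sum.atMost_Suc_shift) simp
  also have "\<dots> = even_row n (Suc k)"
    by (simp add: even_row_def sum_negf[symmetric])
  finally show ?thesis by simp
qed

lemma odd_row_partial_sum: "odd_row (Suc n) k = (\<Sum>i\<in>{1..k}. even_row n i)"
proof (induction k)
  case 0
  then show ?case by (simp add: odd_row_def binomial_eq_0)
next
  case (Suc k)
  then show ?case by (simp add: odd_row_step)
qed

lemma even_row_partial_sum:
  assumes "k \<le> n+1"
  shows "(\<Sum>i\<in>{k..n+1}. odd_row n i) = even_row n k - even_row n (n+2)"
proof -
  have "(\<Sum>i\<in>{k..n+1}. odd_row n i) = - (\<Sum>i\<in>{k..n+1}. even_row n (Suc i) - even_row n i)"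
    by (simp add: odd_row_diff sum_negf[symmetric])
  also have "\<dots> = even_row n k - even_row n (n+2)"
    using sum_Suc_diff[of k "n+1" "even_row n"] assms by simp
  finally show ?thesis .
qed

lemma even_row_1: "even_row n 1 = med (n+1)"
  by (simp add: even_row_def binomial_eq_0)

lemma seidel_even_row_sum:
  assumes "1 \<le> k" "k \<le> n+1"
  shows "seidel (2*n+2) k = (\<Sum>i\<in>{k..n+1}. seidel (2*n+1) i)"
proof -
  have "(2*n+3) div 2 = n+1" "(2*n+2) div 2 = n+1" by auto
  moreover have "2*n+2 = Suc (Suc (2*n))" "2*n+1 = Suc (2*n)" by auto
  ultimately show ?thesis
    using assms seidel.simps(3)[of "2*n" k] by (simp only:) (simp del: seidel.simps)
qed

lemma seidel_even_row_end: "seidel (2*n+2) (n+2) = 0"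
proof -
  have "(2*n+3) div 2 = n+1" "2*n+2 = Suc (Suc (2*n))" by auto
  then show ?thesis
    using seidel.simps(3)[of "2*n" "n+2"] by (simp only:) (simp del: seidel.simps)
qed

lemma seidel_odd_row_sum:
  assumes "1 \<le> k" "k \<le> n+2"
  shows "seidel (2*n+3) k = (\<Sum>i\<in>{1..k}. seidel (2*n+2) i)"
proof -
  have "(2*n+1+3) div 2 = n+2" by auto
  moreover have "2*n+3 = Suc (Suc (2*n+1))" "2*n+2 = Suc (2*n+1)" by auto
  ultimately show ?thesis
    using assms seidel.simps(3)[of "2*n+1" k] by (simp only:) (simp del: seidel.simps)
qed

text \<open>
  If odd row 2n+1 has the conjectured form, so does even row 2n+2, and the even-row
  formula vanishes just beyond the support of the row (evaluate at k = 1).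
\<close>
lemma seidel_even_row:
  assumes odd: "\<And>i. 1 \<le> i \<Longrightarrow> i \<le> n+1 \<Longrightarrow> int (seidel (2*n+1) i) = odd_row n i"
  shows "even_row n (n+2) = 0"
    and "1 \<le> k \<Longrightarrow> k \<le> n+2 \<Longrightarrow> int (seidel (2*n+2) k) = even_row n k"
proof -
  have sum: "int (seidel (2*n+2) k) = even_row n k - even_row n (n+2)"
    if "1 \<le> k" "k \<le> n+1" for k
  proof -
    have "int (seidel (2*n+2) k) = (\<Sum>i\<in>{k..n+1}. int (seidel (2*n+1) i))"
      using seidel_even_row_sum[OF that] by simp
    also have "\<dots> = (\<Sum>i\<in>{k..n+1}. odd_row n i)"
      using odd that by (intro sum.cong) auto
    finally show ?thesis using even_row_partial_sum that by simp
  qed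
  show zero: "even_row n (n+2) = 0"
    using sum[of 1] even_row_1[of n] by (simp add: med_def)
  show "int (seidel (2*n+2) k) = even_row n k" if "1 \<le> k" "k \<le> n+2"
  proof (cases "k = n+2")
    case True
    then show ?thesis using zero seidel_even_row_end[of n] by simp
  next
    case False
    then show ?thesis using sum[of k] that zero by simp
  qed
qed

lemma seidel_odd_row: "1 \<le> k \<Longrightarrow> k \<le> n+1 \<Longrightarrow> int (seidel (2*n+1) k) = odd_row n k"
proof (induction n arbitrary: k)
  case 0
  then show ?case by (auto simp: odd_row_def med_def)
next
  case (Suc n)
  have "2*Suc n+1 = 2*n+3" by simp
  then have "int (seidel (2*Suc n+1) k) = (\<Sum>i\<in>{1..k}. int (seidel (2*n+2) i))"
    using seidel_odd_row_sum[of k n] Suc.prems by (simp only:) simp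
  also have "\<dots> = (\<Sum>i\<in>{1..k}. even_row n i)"
    using seidel_even_row(2)[OF Suc.IH] Suc.prems by (intro sum.cong) auto
  finally show ?case by (simp add: odd_row_partial_sum)
qed

lemma med_recurrence:
  "med (n+1) = (\<Sum>i\<le>n. (-1)^i * int ((n+2+i) choose (2*i+2)) * med (n-i))"
proof -
  have "even_row n (n+2) = 0"
    by (rule seidel_even_row(1)) (rule seidel_odd_row)
  then show ?thesis by (simp add: even_row_def)
qed

text \<open>
  The transfer recursion for weighted Motzkin paths; by path_sum_eq_mcount below,
  mcount n j is the total weight of the paths of length n from height 0 to height j.
\<close>
fun mcount :: "nat \<Rightarrow> nat \<Rightarrow> nat" where
  "mcount 0 j = (if j = 0 then 1 else 0)"
| "mcount (Suc n) j = gamma j * mcount n j + beta j * mcount n (Suc j)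
     + (if j = 0 then 0 else alpha (j-1) * mcount n (j-1))"

definition motzkin_to :: "nat \<Rightarrow> nat \<Rightarrow> (nat \<Rightarrow> nat) set" where
  "motzkin_to n j = {f. f 0 = 0 \<and> f n = j \<and>
      (\<forall>k<n. f (Suc k) \<le> f k + 1 \<and> f k \<le> f (Suc k) + 1) \<and> (\<forall>k>n. f k = 0)}"

definition path_weight :: "nat \<Rightarrow> (nat \<Rightarrow> nat) \<Rightarrow> nat" where
  "path_weight n f = (\<Prod>k<n. wt (f k) (f (Suc k)))"

lemma motzkin_eq_motzkin_to: "motzkin n = motzkin_to n 0"
  by (simp add: motzkin_def motzkin_to_def)

lemma motzkin_to_height: "f \<in> motzkin_to n j \<Longrightarrow> k \<le> n \<Longrightarrow> f k \<le> k"
proof (induction k)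
  case 0
  then show ?case by (simp add: motzkin_to_def)
next
  case (Suc k)
  then have "f (Suc k) \<le> f k + 1" by (simp add: motzkin_to_def)
  then show ?case using Suc by simp
qed

lemma finite_motzkin_to: "finite (motzkin_to n j)"
proof (rule finite_subset)
  let ?F = "{f. \<forall>x. (x \<in> {..n} \<longrightarrow> f x \<in> {..n}) \<and> (x \<notin> {..n} \<longrightarrow> f x = (0::nat))}"
  show "motzkin_to n j \<subseteq> ?F"
  proof
    fix f assume f: "f \<in> motzkin_to n j"
    then have "f x \<le> n" if "x \<le> n" for x
      using motzkin_to_height[OF f that] that by linarith
    then show "f \<in> ?F" using f by (auto simp: motzkin_to_def)
  qed
  show "finite ?F"
    by (rule finite_set_of_finite_funs) auto
qed

lemma motzkin_to_0: "motzkin_to 0 j = (if j = 0 then {\<lambda>_. 0} else {})"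
proof -
  have "f = (\<lambda>_. 0)" if "f \<in> motzkin_to 0 j" for f
  proof
    fix k show "f k = 0" using that by (cases k) (auto simp: motzkin_to_def)
  qed
  then show ?thesis by (auto simp: motzkin_to_def)
qed

text \<open>
  Removing the last step is a bijection between the paths to j whose penultimate height
  is i and the paths to i, provided the step i \<rightarrow> j is allowed.
\<close>
lemma paths_with_last_height:
  assumes "wt i j \<noteq> 0"
  shows "(\<Sum>f | f \<in> motzkin_to (Suc n) j \<and> f n = i. path_weight n f)
       = (\<Sum>g\<in>motzkin_to n i. path_weight n g)"
proof -
  have ij: "j \<le> i + 1 \<and> i \<le> j + 1" using assms by (auto simp: wt_def split: if_splits)
  have weight_upd: "path_weight n (f(Suc n := a)) = path_weight n f" for f a
    unfolding path_weight_def by (intro prod.cong) auto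
  show ?thesis
  proof (rule sum.reindex_bij_witness[where i = "\<lambda>g. g(Suc n := j)" and j = "\<lambda>f. f(Suc n := 0)"])
    fix f assume f: "f \<in> {f. f \<in> motzkin_to (Suc n) j \<and> f n = i}"
    then show "f(Suc n := 0, Suc n := j) = f" by (auto simp: motzkin_to_def)
    show "f(Suc n := 0) \<in> motzkin_to n i" using f by (auto simp: motzkin_to_def)
    show "path_weight n (f(Suc n := 0)) = path_weight n f" by (rule weight_upd)
  next
    fix g assume g: "g \<in> motzkin_to n i"
    then show "g(Suc n := j, Suc n := 0) = g" by (auto simp: motzkin_to_def)
    show "g(Suc n := j) \<in> {f. f \<in> motzkin_to (Suc n) j \<and> f n = i}"
      using g ij by (auto simp: motzkin_to_def less_Suc_eq)
  qed
qed

lemma path_sum_Suc: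
  "(\<Sum>f\<in>motzkin_to (Suc n) j. path_weight (Suc n) f)
     = (\<Sum>i\<le>Suc j. wt i j * (\<Sum>g\<in>motzkin_to n i. path_weight n g))"
proof -
  have "(\<Sum>f\<in>motzkin_to (Suc n) j. path_weight (Suc n) f) =
      (\<Sum>i\<le>Suc j. \<Sum>f | f \<in> motzkin_to (Suc n) j \<and> f n = i. path_weight (Suc n) f)"
  proof (rule sum.group[symmetric])
    show "(\<lambda>f. f n) ` motzkin_to (Suc n) j \<subseteq> {..Suc j}"
      by (auto simp: motzkin_to_def)
  qed (simp_all add: finite_motzkin_to)
  also have "\<dots> = (\<Sum>i\<le>Suc j. wt i j * (\<Sum>g\<in>motzkin_to n i. path_weight n g))"
  proof (rule sum.cong[OF refl])
    fix i
    have "(\<Sum>f | f \<in> motzkin_to (Suc n) j \<and> f n = i. path_weight (Suc n) f) =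
        wt i j * (\<Sum>f | f \<in> motzkin_to (Suc n) j \<and> f n = i. path_weight n f)"
      by (auto simp: sum_distrib_left path_weight_def motzkin_to_def intro!: sum.cong)
    then show "(\<Sum>f | f \<in> motzkin_to (Suc n) j \<and> f n = i. path_weight (Suc n) f) =
        wt i j * (\<Sum>g\<in>motzkin_to n i. path_weight n g)"
      using paths_with_last_height[of i j n] by (cases "wt i j = 0") auto
  qed
  finally show ?thesis .
qed

text \<open>Only the three heights j-1, j, j+1 can precede height j.\<close>
lemma wt_sum_collapse:
  "(\<Sum>i\<le>Suc j. wt i j * W i)
     = gamma j * W j + beta j * W (Suc j) + (if j = 0 then 0 else alpha (j-1) * W (j-1))"
proof -
  have "(\<Sum>i\<le>Suc j. wt i j * W i) = wt (Suc j) j * W (Suc j) + wt j j * W j + (\<Sum>i<j. wt i j * W i)"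
    by (simp add: lessThan_Suc_atMost[symmetric])
  moreover have "(\<Sum>i<j. wt i j * W i) = (if j = 0 then 0 else alpha (j-1) * W (j-1))"
  proof (cases j)
    case (Suc j')
    have "(\<Sum>i<j'. wt i j * W i) = 0" using Suc by (intro sum.neutral) (auto simp: wt_def)
    then show ?thesis using Suc by (simp add: wt_def)
  qed simp
  ultimately show ?thesis by (simp add: wt_def)
qed

lemma path_sum_eq_mcount: "(\<Sum>f\<in>motzkin_to n j. path_weight n f) = mcount n j"
proof (induction n arbitrary: j)
  case 0
  then show ?case by (simp add: motzkin_to_0 path_weight_def)
next
  case (Suc n)
  then show ?case by (simp only: path_sum_Suc wt_sum_collapse mcount.simps)
qed

lemma alpha_double: "2 * alpha j = (j+1) * (j+2)"
proof -
  have "even ((j+1) * (j+2))" by auto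
  then show ?thesis by (simp add: alpha_def)
qed

lemma alpha_pos: "alpha j > 0"
  by (simp add: alpha_def)

lemma beta_eq_alpha: "beta j = alpha j"
  by (simp add: alpha_def beta_def)

lemma gamma_Suc: "gamma (Suc j) = alpha j + alpha (Suc j)"
proof -
  have "2 * gamma (Suc j) = 2 * (alpha j + alpha (Suc j))"
    unfolding distrib_left alpha_double by (simp add: gamma_def power2_eq_square algebra_simps)
  then show ?thesis by simp
qed

lemma gamma_0: "gamma 0 = alpha 0"
  by (simp add: gamma_def alpha_def)

lemma dcf_odd: "dcf (2*j+1) = alpha j"
  by (simp add: dcf_def choose_two alpha_def algebra_simps)

lemma dcf_even: "dcf (2*j+2) = alpha j"
  by (simp add: dcf_def choose_two alpha_def algebra_simps)

text \<open>A path cannot rise faster than one step at a time.\<close>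
lemma mcount_below: "n < j \<Longrightarrow> mcount n j = 0"
  by (induction n arbitrary: j) simp_all

text \<open>Weight of the unique path reaching height j in j steps.\<close>
definition rise_weight :: "nat \<Rightarrow> nat" where "rise_weight j = (\<Prod>i<j. alpha i)"

lemma rise_weight_pos: "rise_weight j > 0"
  by (simp add: rise_weight_def alpha_pos)

lemma mcount_diag: "mcount j j = rise_weight j"
  by (induction j) (simp_all add: rise_weight_def mcount_below)

text \<open>
  Normalised generating series of paths ending at height j (ser_even) and at height j or
  j+1 (ser_odd); interleaved they form ser 0 = 1, ser (2j+1) = ser_even j,
  ser (2j+2) = ser_odd j.
\<close>
definition ser_even :: "nat \<Rightarrow> rat fps" where
  "ser_even j = Abs_fps (\<lambda>n. of_nat (mcount (n+j) j) / of_nat (rise_weight j))"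

definition ser_odd :: "nat \<Rightarrow> rat fps" where
  "ser_odd j = Abs_fps (\<lambda>n. (of_nat (mcount (n+j) j) + of_nat (mcount (n+j) (Suc j)))
                             / of_nat (rise_weight j))"

definition ser :: "nat \<Rightarrow> rat fps" where
  "ser k = (if k = 0 then 1 else if odd k then ser_even ((k-1) div 2) else ser_odd ((k-2) div 2))"

lemma const_X_mult_nth:
  "(fps_const c * fps_X * (h :: 'a :: comm_ring_1 fps)) $ n = (if n = 0 then 0 else c * h $ (n - 1))"
  unfolding mult.assoc fps_mult_left_const_nth fps_X_mult_nth by simp

lemma rise_weight_Suc: "(of_nat (rise_weight (Suc j)) :: rat) = of_nat (rise_weight j) * of_nat (alpha j)"
  by (simp add: rise_weight_def)

lemma ser_even_0: "ser_even 0 = 1 + fps_const (of_nat (alpha 0)) * fps_X * ser_odd 0"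
proof (rule fps_ext)
  fix n show "ser_even 0 $ n = (1 + fps_const (of_nat (alpha 0)) * fps_X * ser_odd 0) $ n"
    by (cases n) (simp_all add: ser_even_def ser_odd_def rise_weight_def gamma_0 beta_eq_alpha
                               const_X_mult_nth algebra_simps)
qed

text \<open>The transfer recursion, read at height j and j+1, gives the contraction relations.\<close>
lemma ser_odd_rel: "ser_odd j = ser_even j + fps_const (of_nat (alpha j)) * fps_X * ser_even (Suc j)"
proof (rule fps_ext)
  fix n
  have nz: "(of_nat (rise_weight j) :: rat) \<noteq> 0" "(of_nat (alpha j) :: rat) \<noteq> 0"
    using rise_weight_pos[of j] alpha_pos[of j] by simp_all
  show "ser_odd j $ n = (ser_even j + fps_const (of_nat (alpha j)) * fps_X * ser_even (Suc j)) $ n"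
  proof (cases n)
    case 0
    then show ?thesis by (simp add: ser_even_def ser_odd_def const_X_mult_nth mcount_below del: mcount.simps)
  next
    case (Suc n')
    then have "n' + Suc j = n + j" by simp
    then show ?thesis using nz
      by (simp add: ser_even_def ser_odd_def const_X_mult_nth rise_weight_Suc field_simps
               del: mcount.simps)
  qed
qed

lemma ser_even_rel:
  "ser_even (Suc j) = ser_odd j + fps_const (of_nat (alpha (Suc j))) * fps_X * ser_odd (Suc j)"
proof (rule fps_ext)
  fix n
  have nz: "(of_nat (rise_weight j) :: rat) \<noteq> 0" "(of_nat (alpha j) :: rat) \<noteq> 0"
    using rise_weight_pos[of j] alpha_pos[of j] by simp_all
  show "ser_even (Suc j) $ n = (ser_odd j + fps_const (of_nat (alpha (Suc j))) * fps_X * ser_odd (Suc j)) $ n"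
  proof (cases n)
    case 0
    then show ?thesis using nz
      by (simp add: ser_even_def ser_odd_def const_X_mult_nth mcount_below mcount_diag rise_weight_Suc)
  next
    case (Suc n')
    define m where "m = n' + Suc j"
    have rec: "(of_nat (mcount (Suc m) (Suc j)) :: rat) =
       of_nat (alpha j) * of_nat (mcount m j) + (of_nat (alpha j) + of_nat (alpha (Suc j))) * of_nat (mcount m (Suc j))
       + of_nat (alpha (Suc j)) * of_nat (mcount m (Suc (Suc j)))"
      by (simp add: gamma_Suc beta_eq_alpha algebra_simps)
    have lhs: "ser_even (Suc j) $ n = of_nat (mcount (Suc m) (Suc j)) / of_nat (rise_weight (Suc j))"
      using Suc by (simp add: ser_even_def m_def del: mcount.simps)
    have rhs: "(ser_odd j + fps_const (of_nat (alpha (Suc j))) * fps_X * ser_odd (Suc j)) $ n =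
       (of_nat (mcount m j) + of_nat (mcount m (Suc j))) / of_nat (rise_weight j) +
       of_nat (alpha (Suc j)) * ((of_nat (mcount m (Suc j)) + of_nat (mcount m (Suc (Suc j))))
         / of_nat (rise_weight (Suc j)))"
      using Suc by (simp add: ser_odd_def const_X_mult_nth m_def del: mcount.simps)
    show ?thesis unfolding lhs rhs rec rise_weight_Suc using nz
      by (simp add: field_simps del: mcount.simps)
  qed
qed

lemma index_cases:
  fixes k :: nat
  obtains "k = 0" | j where "k = 2*j+1" | j where "k = 2*j+2"
proof -
  have "k = 0 \<or> (\<exists>j. k = 2*j+1) \<or> (\<exists>j. k = 2*j+2)" by presburger
  then show thesis using that by blast
qed

lemma ser_0: "ser 0 = 1"
  by (simp add: ser_def)

lemma ser_at_odd: "ser (2*j+1) = ser_even j"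
  by (simp add: ser_def)

lemma ser_at_even: "ser (2*j+2) = ser_odd j"
  by (simp add: ser_def)

lemma ser_rel: "ser (Suc k) = ser k + fps_const (of_nat (dcf (Suc k))) * fps_X * ser (Suc (Suc k))"
proof (cases k rule: index_cases)
  case 1
  then show ?thesis using ser_0 ser_even_0 ser_at_odd[of 0] ser_at_even[of 0] dcf_odd[of 0] by simp
next
  case (2 j)
  then have "Suc k = 2*j+2" "Suc (Suc k) = 2 * Suc j + 1" by simp_all
  then show ?thesis using 2 ser_odd_rel[of j]
    by (simp only: ser_at_odd ser_at_even dcf_even)
next
  case (3 j)
  then have "Suc k = 2 * Suc j + 1" "Suc (Suc k) = 2 * Suc j + 2" by simp_all
  then show ?thesis using 3 ser_even_rel[of j]
    by (simp only: ser_at_odd ser_at_even dcf_odd)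
qed

lemma ser_nth_0: "ser k $ 0 = 1"
proof -
  have nz: "(of_nat (rise_weight j) :: rat) \<noteq> 0" for j using rise_weight_pos[of j] by simp
  have "ser_even j $ 0 = 1" "ser_odd j $ 0 = 1" for j
    using nz by (simp_all add: ser_even_def ser_odd_def mcount_diag mcount_below)
  with ser_0 show ?thesis
    by (cases k rule: index_cases) (simp_all only: ser_at_odd ser_at_even, simp_all)
qed

text \<open>The tails of the continued fraction are the successive ratios of the series.\<close>
definition cf_tail :: "nat \<Rightarrow> rat fps" where
  "cf_tail k = ser k * inverse (ser (k-1))"

lemma cf_tail_nth_0: "cf_tail k $ 0 = 1"
  by (simp add: cf_tail_def ser_nth_0)

lemma cf_tail_1: "cf_tail 1 = Abs_fps (\<lambda>n. of_nat (mcount n 0))"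
  using ser_at_odd[of 0] by (simp add: cf_tail_def ser_0 ser_even_def rise_weight_def)

lemma ratio_rel:
  fixes u v w :: "'a :: field fps"
  assumes "v = u + fps_const d * fps_X * w" "u $ 0 \<noteq> 0" "v $ 0 \<noteq> 0"
  shows "v * inverse u = inverse (1 - fps_const d * fps_X * (w * inverse v))"
proof -
  have "v * inverse v = 1" using assms(3) by (rule inverse_mult_eq_1')
  then have "1 - fps_const d * fps_X * (w * inverse v) = (v - fps_const d * fps_X * w) * inverse v"
    by (simp add: left_diff_distrib mult.assoc)
  also have "\<dots> = u * inverse v" using assms(1) by simp
  finally have "inverse (1 - fps_const d * fps_X * (w * inverse v)) = inverse (u * inverse v)"
    by simp
  also have "\<dots> = v * inverse u" using assms(2,3) by (simp add: fps_inverse_mult mult.commute)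
  finally show ?thesis by simp
qed

lemma cf_tail_rel:
  assumes "1 \<le> k"
  shows "cf_tail k = inverse (1 - fps_const (of_nat (dcf k)) * fps_X * cf_tail (Suc k))"
proof -
  obtain k' where k: "k = Suc k'" using assms by (cases k) auto
  have "cf_tail k = ser (Suc k') * inverse (ser k')"
    "cf_tail (Suc k) = ser (Suc (Suc k')) * inverse (ser (Suc k'))"
    by (simp_all add: cf_tail_def k)
  moreover have "ser k' $ 0 \<noteq> 0" "ser (Suc k') $ 0 \<noteq> 0" by (simp_all add: ser_nth_0)
  ultimately show ?thesis
    using ratio_rel[OF ser_rel] k by (simp only:)
qed

lemma inverse_nth_agree:
  fixes f g :: "'a :: field fps"
  assumes agree: "\<forall>i<M. f $ i = g $ i" and f0: "f $ 0 \<noteq> 0" and i: "i < M"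
  shows "inverse f $ i = inverse g $ i"
proof -
  have g0: "g $ 0 \<noteq> 0" using agree f0 i by auto
  define dd where "dd = g - f"
  have "fps_cutoff M dd = 0" using agree by (auto simp: fps_eq_iff dd_def)
  then have dd_X: "dd = fps_X^M * fps_shift M dd" using fps_shift_cutoff'[of M dd] by simp
  have "inverse f - inverse g = inverse f * dd * inverse g"
    using inverse_mult_eq_1'[OF g0] inverse_mult_eq_1[OF f0] by (simp add: dd_def algebra_simps)
  also have "\<dots> = fps_X^M * (inverse f * fps_shift M dd * inverse g)"
    by (subst dd_X) (simp add: ac_simps)
  finally have "(inverse f - inverse g) $ i = (fps_X^M * (inverse f * fps_shift M dd * inverse g)) $ i"
    by simp
  then show ?thesis using i by (simp add: fps_X_power_mult_nth)
qed

lemma cf_nth_agree: "1 \<le> k \<Longrightarrow> n \<le> N \<Longrightarrow> cf k N $ n = cf_tail k $ n"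
proof (induction N arbitrary: k n)
  case 0
  then show ?case by (simp add: cf_tail_nth_0)
next
  case (Suc N)
  let ?d = "fps_const (of_nat (dcf k) :: rat) * fps_X"
  have "\<forall>i<Suc (Suc N). (1 - ?d * cf (Suc k) N) $ i = (1 - ?d * cf_tail (Suc k)) $ i"
    using Suc.IH[of "Suc k"] by (simp add: const_X_mult_nth)
  then have "inverse (1 - ?d * cf (Suc k) N) $ n = inverse (1 - ?d * cf_tail (Suc k)) $ n"
    using Suc.prems by (intro inverse_nth_agree) (auto simp: const_X_mult_nth)
  then show ?case using cf_tail_rel[OF Suc.prems(1)] by simp
qed

definition tri :: "nat \<Rightarrow> rat" where "tri m = of_nat m * (of_nat m + 1) / 2"

lemma alpha_tri: "(of_nat (alpha j) :: rat) = tri (Suc j)"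
proof -
  have "(of_nat (2 * alpha j) :: rat) = of_nat ((j+1) * (j+2))" by (simp only: alpha_double)
  then show ?thesis by (simp add: tri_def field_simps)
qed

lemma gamma_tri: "(of_nat (gamma j) :: rat) = tri j + tri (Suc j)"
  by (simp add: gamma_def tri_def field_simps power2_eq_square)

text \<open>
  The coefficients bcoef n m of the series t^m / ((1 + c_1 t) \<cdots> (1 + c_m t)) in t,
  defined by the corresponding recursion in n.
\<close>
fun bcoef :: "nat \<Rightarrow> nat \<Rightarrow> rat" where
  "bcoef 0 m = (if m = 0 then 1 else 0)"
| "bcoef (Suc n) m = (if m = 0 then 0 else bcoef n (m-1)) - tri m * bcoef n m"

text \<open>t^m / ((1 + c_1 t) \<cdots> (1 + c_m t)) has order m.\<close>
lemma bcoef_below: "n < m \<Longrightarrow> bcoef n m = 0"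
  by (induction n arbitrary: m) simp_all

definition tri_prod :: "nat \<Rightarrow> rat" where "tri_prod m = (\<Prod>k\<in>{1..m}. tri k)"

lemma tri_prod_Suc: "tri_prod (Suc m) = tri_prod m * tri (Suc m)"
  by (simp add: tri_prod_def)

lemma binomial_absorption_rat:
  "(of_nat (Suc k) * of_nat (n choose Suc k) :: rat) = (of_nat n - of_nat k) * of_nat (n choose k)"
proof (cases "k \<le> n")
  case True
  have "Suc k * (n choose Suc k) = (n - k) * (n choose k)"
    using binomial_absorption[of k n] binomial_absorb_comp[of n k] by simp
  then have "(of_nat (Suc k * (n choose Suc k)) :: rat) = of_nat ((n - k) * (n choose k))" by simp
  then show ?thesis using True by (simp add: of_nat_diff algebra_simps)
qed (simp add: binomial_eq_0)

text \<open>
  The identity behind the expansion below: c_{m+1} C(m+1,j) - c_m C(m,j) is the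
  transfer operator applied to the column j \<mapsto> C(m,j).
\<close>
lemma tri_binomial_identity:
  "tri (Suc m) * of_nat (Suc m choose j) - tri m * of_nat (m choose j) =
   (tri j + tri (Suc j)) * of_nat (m choose j) + tri (Suc j) * of_nat (m choose Suc j)
   + (if j = 0 then 0 else tri j * of_nat (m choose (j-1)))"
proof (cases j)
  case 0
  then show ?thesis by (simp add: tri_def field_simps)
next
  case (Suc j')
  define x :: rat where "x = of_nat m"
  define y :: rat where "y = of_nat j"
  define b0 :: rat where "b0 = of_nat (m choose j)"
  define bm :: rat where "bm = of_nat (m choose j')"
  define bp :: rat where "bp = of_nat (m choose Suc j)"
  have pascal: "of_nat (Suc m choose j) = bm + b0" unfolding b0_def bm_def Suc by simp
  have up: "(y+1) * bp = (x - y) * b0"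
    using binomial_absorption_rat[of j m] by (simp add: x_def y_def b0_def bp_def add.commute)
  have down: "y * b0 = (x - y + 1) * bm"
    using binomial_absorption_rat[of j' m] Suc by (simp add: x_def y_def b0_def bm_def)
  have "2 * (tri (Suc m) * (bm + b0) - tri m * b0 - ((tri j + tri (Suc j)) * b0 + tri (Suc j) * bp + tri j * bm)) =
    (x+y+2) * ((x - y + 1) * bm) + (2*(x+1) - 2*(y+1)^2) * b0 - (y+2) * ((y+1) * bp)"
    by (simp add: tri_def x_def y_def field_simps power2_eq_square)
  also have "\<dots> = (x+y+2) * (y * b0) + (2*(x+1) - 2*(y+1)^2) * b0 - (y+2) * ((x - y) * b0)"
    using up down by simp
  also have "\<dots> = 0" by (simp add: algebra_simps power2_eq_square)
  finally show ?thesis unfolding pascal using Suc by (simp add: b0_def bp_def bm_def)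
qed

lemma mcount_expansion:
  "of_nat (mcount n j) = (\<Sum>m\<le>n. of_nat (m choose j) * tri_prod m * bcoef n m)"
proof (induction n arbitrary: j)
  case 0
  then show ?case by (simp add: tri_prod_def)
next
  case (Suc n)
  define T where "T j = (\<Sum>m\<le>n. of_nat (m choose j) * tri_prod m * bcoef n m)" for j
  have up: "(\<Sum>m\<le>Suc n. of_nat (m choose j) * tri_prod m * (if m = 0 then 0 else bcoef n (m-1))) =
      (\<Sum>m\<le>n. of_nat (Suc m choose j) * tri_prod (Suc m) * bcoef n m)"
    by (subst sum.atMost_Suc_shift) simp
  have stay: "(\<Sum>m\<le>Suc n. of_nat (m choose j) * tri_prod m * (tri m * bcoef n m)) =
      (\<Sum>m\<le>n. of_nat (m choose j) * tri_prod m * (tri m * bcoef n m))"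
    by (simp add: bcoef_below)
  have "(\<Sum>m\<le>Suc n. of_nat (m choose j) * tri_prod m * bcoef (Suc n) m) =
      (\<Sum>m\<le>Suc n. of_nat (m choose j) * tri_prod m * (if m = 0 then 0 else bcoef n (m-1)))
      - (\<Sum>m\<le>Suc n. of_nat (m choose j) * tri_prod m * (tri m * bcoef n m))"
    by (simp add: sum_subtractf[symmetric] right_diff_distrib del: sum.atMost_Suc)
  also have "\<dots> = (\<Sum>m\<le>n. tri_prod m * bcoef n m *
      (tri (Suc m) * of_nat (Suc m choose j) - tri m * of_nat (m choose j)))"
    unfolding up stay sum_subtractf[symmetric] by (intro sum.cong) (auto simp: tri_prod_Suc algebra_simps)
  also have "\<dots> = (tri j + tri (Suc j)) * T j + tri (Suc j) * T (Suc j)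
      + (if j = 0 then 0 else tri j * T (j-1))"
    unfolding tri_binomial_identity T_def by (simp add: sum.distrib sum_distrib_left algebra_simps)
  also have "\<dots> = of_nat (mcount (Suc n) j)"
    by (simp add: Suc.IH T_def gamma_tri beta_eq_alpha alpha_tri)
  finally show ?case by simp
qed

text \<open>
  The transform subst_gf b = -X^2/(1-X)^2 \<cdot> B(-2X^2/(1-X)) of the series B(u) = \<Sum>_q b_q u^q,
  written out coefficientwise.
\<close>
definition subst_gf :: "(nat \<Rightarrow> rat) \<Rightarrow> rat fps" where
  "subst_gf b = Abs_fps (\<lambda>N. \<Sum>q<N. (-1)^(Suc q) * of_nat ((N - Suc q) choose (Suc q)) * 2^q * b q)"

definition shift_seq :: "(nat \<Rightarrow> rat) \<Rightarrow> nat \<Rightarrow> rat" where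
  "shift_seq b q = (if q = 0 then 0 else b (q-1))"

lemma subst_gf_nth_0: "subst_gf b $ 0 = 0"
  by (simp add: subst_gf_def)

text \<open>Coefficientwise form of subst_gf_shift below, by Pascal's rule.\<close>
lemma subst_gf_shift_nth:
  "subst_gf (shift_seq b) $ Suc (Suc N) - subst_gf (shift_seq b) $ Suc N = - 2 * subst_gf b $ N"
proof -
  have hi: "subst_gf (shift_seq b) $ Suc (Suc N) =
      (\<Sum>q<N. (-1)^q * of_nat ((N - q) choose (q+2)) * 2^(q+1) * b q)"
    unfolding subst_gf_def fps_nth_Abs_fps
    by (subst sum.lessThan_Suc_shift) (simp add: shift_seq_def)
  have lo: "subst_gf (shift_seq b) $ Suc N =
      (\<Sum>q<N. (-1)^q * of_nat ((N - Suc q) choose (q+2)) * 2^(q+1) * b q)"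
    unfolding subst_gf_def fps_nth_Abs_fps
    by (subst sum.lessThan_Suc_shift) (simp add: shift_seq_def)
  have "subst_gf (shift_seq b) $ Suc (Suc N) - subst_gf (shift_seq b) $ Suc N =
        (\<Sum>q<N. (-1)^q * of_nat ((N - Suc q) choose (q+1)) * 2^(q+1) * b q)"
    unfolding hi lo sum_subtractf[symmetric]
  proof (rule sum.cong[OF refl])
    fix q assume "q \<in> {..<N}"
    then have "N - q = Suc (N - Suc q)" by simp
    then have "(N - q) choose (q+2) = ((N - Suc q) choose (q+1)) + ((N - Suc q) choose (q+2))"
      by (simp add: numeral_eq_Suc)
    then show "(-1)^q * of_nat ((N - q) choose (q+2)) * 2^(q+1) * b q -
         (-1)^q * of_nat ((N - Suc q) choose (q+2)) * 2^(q+1) * b q =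
         (-1)^q * of_nat ((N - Suc q) choose (q+1)) * 2^(q+1) * b q"
      by (simp add: algebra_simps)
  qed
  also have "\<dots> = - 2 * subst_gf b $ N"
    unfolding subst_gf_def fps_nth_Abs_fps sum_distrib_left by (intro sum.cong) (auto simp: algebra_simps)
  finally show ?thesis .
qed

text \<open>Shifting b multiplies B(u) by u, i.e. multiplies the transform by -2X^2/(1-X).\<close>
lemma subst_gf_shift: "(1 - fps_X) * subst_gf (shift_seq b) = - 2 * fps_X^2 * subst_gf b"
proof (rule fps_ext)
  fix N
  show "((1 - fps_X) * subst_gf (shift_seq b)) $ N = (- 2 * fps_X^2 * subst_gf b) $ N"
  proof (cases "N < 2")
    case True
    then show ?thesis
      by (cases N) (auto simp: subst_gf_def shift_seq_def algebra_simps less_Suc_eq)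
  next
    case False
    then obtain N' where N: "N = Suc (Suc N')" by (metis add_2_eq_Suc le_add_diff_inverse not_less)
    have "((1 - fps_X) * subst_gf (shift_seq b)) $ N =
        subst_gf (shift_seq b) $ Suc (Suc N') - subst_gf (shift_seq b) $ Suc N'"
      using N by (simp add: algebra_simps)
    also have "\<dots> = (- 2 * fps_X^2 * subst_gf b) $ N"
      using N by (simp add: subst_gf_shift_nth fps_X_power_mult_nth fps_numeral_fps_const mult.assoc)
    finally show ?thesis .
  qed
qed

lemma subst_gf_linear: "subst_gf (\<lambda>q. f q - c * g q) = subst_gf f - fps_const c * subst_gf g"
proof (rule fps_ext)
  fix N
  have "(\<Sum>q<N. (-1)^(Suc q) * of_nat ((N - Suc q) choose (Suc q)) * 2^q * (f q - c * g q)) =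
    (\<Sum>q<N. (-1)^(Suc q) * of_nat ((N - Suc q) choose (Suc q)) * 2^q * f q) -
    c * (\<Sum>q<N. (-1)^(Suc q) * of_nat ((N - Suc q) choose (Suc q)) * 2^q * g q)"
    unfolding sum_distrib_left sum_subtractf[symmetric] by (rule sum.cong) (auto simp: algebra_simps)
  then show "subst_gf (\<lambda>q. f q - c * g q) $ N = (subst_gf f - fps_const c * subst_gf g) $ N"
    by (simp add: subst_gf_def)
qed

text \<open>The transform of the m-th column of bcoef, i.e. of u^m / ((1 + c_1 u) \<cdots> (1 + c_m u)).\<close>
definition col_gf :: "nat \<Rightarrow> rat fps" where "col_gf m = subst_gf (\<lambda>q. bcoef q m)"

text \<open>Under the substitution 1 + c_{m+1} u becomes (1 - X - (m+1)(m+2) X^2)/(1-X).\<close>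
lemma col_gf_Suc:
  "(1 - fps_X - fps_const (of_nat ((m+1)*(m+2))) * fps_X^2) * col_gf (Suc m) = - 2 * fps_X^2 * col_gf m"
proof -
  define p :: rat where "p = of_nat ((m+1)*(m+2))"
  have col: "(\<lambda>q. bcoef q (Suc m)) =
      (\<lambda>q. shift_seq (\<lambda>q. bcoef q m) q - tri (Suc m) * shift_seq (\<lambda>q. bcoef q (Suc m)) q)"
  proof
    fix q show "bcoef q (Suc m) = shift_seq (\<lambda>q. bcoef q m) q - tri (Suc m) * shift_seq (\<lambda>q. bcoef q (Suc m)) q"
      by (cases q) (simp_all add: shift_seq_def)
  qed
  have "(1 - fps_X) * col_gf (Suc m) =
      (1 - fps_X) * subst_gf (shift_seq (\<lambda>q. bcoef q m))
      - fps_const (tri (Suc m)) * ((1 - fps_X) * subst_gf (shift_seq (\<lambda>q. bcoef q (Suc m))))"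
    unfolding col_gf_def by (subst col) (simp add: subst_gf_linear algebra_simps)
  also have "\<dots> = - 2 * fps_X^2 * col_gf m - fps_const (tri (Suc m)) * (- 2 * fps_X^2 * col_gf (Suc m))"
    unfolding subst_gf_shift col_gf_def by simp
  also have "fps_const (tri (Suc m)) * (- 2 * fps_X^2 * col_gf (Suc m)) =
      fps_const (tri (Suc m) * (-2)) * (fps_X^2 * col_gf (Suc m))"
    by (simp only: fps_numeral_fps_const fps_const_neg fps_const_mult[symmetric] mult.assoc)
  also have "tri (Suc m) * (-2) = - p" by (simp add: tri_def p_def field_simps)
  also have "fps_const (- p) * (fps_X^2 * col_gf (Suc m)) = - (fps_const p * (fps_X^2 * col_gf (Suc m)))"
    by (simp add: fps_const_neg[symmetric] del: fps_const_neg)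
  finally have "(1 - fps_X) * col_gf (Suc m) = - 2 * fps_X^2 * col_gf m + fps_const p * (fps_X^2 * col_gf (Suc m))"
    by simp
  then show ?thesis by (simp add: p_def algebra_simps)
qed

text \<open>The column m = 0 is the constant series 1, whose transform is -X^2/(1-X)^2.\<close>
lemma bcoef_col_0: "bcoef q 0 = (if q = 0 then 1 else 0)"
  by (cases q) (simp_all add: tri_def)

lemma col_gf_0_nth: "col_gf 0 $ N = - of_nat (N - 1)"
proof (cases N)
  case (Suc N')
  have "col_gf 0 $ N = (\<Sum>q<Suc N'. (-1)^(Suc q) * of_nat ((Suc N' - Suc q) choose (Suc q)) * 2^q * bcoef q 0)"
    using Suc by (simp add: col_gf_def subst_gf_def)
  also have "\<dots> = - of_nat N'"
    by (subst sum.lessThan_Suc_shift) (simp add: bcoef_col_0)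
  finally show ?thesis using Suc by simp
qed (simp add: col_gf_def subst_gf_def)

lemma col_gf_0: "(1 - fps_X)^2 * col_gf 0 = - (fps_X^2)"
proof (rule fps_ext)
  fix N
  have e: "(1 - fps_X)^2 * col_gf 0 = col_gf 0 - fps_const 2 * (fps_X * col_gf 0) + fps_X^2 * col_gf 0"
    by (simp add: algebra_simps power2_eq_square fps_numeral_fps_const[symmetric])
  show "((1 - fps_X)^2 * col_gf 0) $ N = (- (fps_X^2) :: rat fps) $ N"
    unfolding e by (cases N; cases "N - 1"; simp add: col_gf_0_nth fps_X_power_mult_nth)
qed

definition lin :: "rat \<Rightarrow> rat fps" where "lin a = 1 + fps_const a * fps_X"
definition quad :: "rat \<Rightarrow> rat fps" where "quad a = 1 + fps_const a * fps_X^2"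

definition sq_prod :: "nat \<Rightarrow> rat fps" where "sq_prod m = (\<Prod>i\<in>{1..m}. quad (- of_nat (i^2)))"

lemma fps_const_minus_one: "fps_const (-1::rat) = -1"
  by (metis fps_const_1_eq_1 fps_const_neg)

lemma const_X_power_mult:
  "fps_const a * fps_X^i * (fps_const b * fps_X^j) = fps_const (a*b) * (fps_X^(i+j) :: rat fps)"
  by (rule fps_ext) (auto simp: mult.assoc fps_X_power_mult_nth)

lemma lin_minus_one: "lin (-1) = 1 - fps_X"
  by (simp add: lin_def fps_const_minus_one)

lemma lin_mult: "lin a * lin b = 1 + fps_const (a+b) * fps_X + fps_const (a*b) * fps_X^2"
  unfolding lin_def
  by (simp add: algebra_simps power2_eq_square del: fps_const_add fps_const_mult
      add: fps_const_add[symmetric] fps_const_mult[symmetric])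

lemma lin_conj: "lin (- a) * lin a = quad (- (a^2))"
  unfolding lin_mult quad_def by (simp add: power2_eq_square)

lemma sq_prod_Suc: "sq_prod (Suc m) = sq_prod m * quad (- of_nat ((Suc m)^2))"
  by (simp add: sq_prod_def)

lemma sq_prod_Suc_lin: "sq_prod (Suc m) = sq_prod m * (lin (- of_nat (Suc m)) * lin (of_nat (Suc m)))"
  using lin_conj[of "of_nat (Suc m)"] by (simp add: sq_prod_Suc)

text \<open>
  Closed form of the column transforms: the factors 1 + c_k u become
  (1 + kX)(1 - (k+1)X)/(1-X), which telescope to
  (1-X) \<cdot> sq_prod m \<cdot> (1-(m+1)X) \<cdot> col_gf m = (-1)^{m+1} 2^m X^{2m+2}.
\<close>
lemma col_gf_closed:
  "lin (-1) * sq_prod m * lin (- of_nat (m+1)) * col_gf m = fps_const ((-1)^(m+1) * 2^m) * fps_X^(2*m+2)"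
proof (induction m)
  case 0
  have "lin (-1) * sq_prod 0 * lin (- of_nat (0+1)) * col_gf 0 = (1 - fps_X)^2 * col_gf 0"
    by (simp add: lin_minus_one sq_prod_def power2_eq_square)
  also have "\<dots> = - (fps_X^2)" by (rule col_gf_0)
  finally show ?case by (simp add: fps_const_minus_one power2_eq_square)
next
  case (Suc m)
  have factor: "lin (of_nat (Suc m)) * lin (- of_nat (Suc m + 1)) =
      1 - fps_X - fps_const (of_nat ((m+1)*(m+2))) * fps_X^2"
  proof -
    have sum: "of_nat (Suc m) + - of_nat (Suc m + 1) = (-1::rat)" by simp
    have prod: "of_nat (Suc m) * - of_nat (Suc m + 1) = - (of_nat ((m+1)*(m+2)) :: rat)"
      by (simp add: algebra_simps)
    show ?thesis unfolding lin_mult sum prod fps_const_minus_one fps_const_neg[symmetric]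
      by (simp add: algebra_simps del: fps_const_neg)
  qed
  have "lin (-1) * sq_prod (Suc m) * lin (- of_nat (Suc m + 1)) * col_gf (Suc m) =
     (lin (-1) * sq_prod m * lin (- of_nat (m+1))) *
     ((lin (of_nat (Suc m)) * lin (- of_nat (Suc m + 1))) * col_gf (Suc m))"
    by (simp add: sq_prod_Suc_lin ac_simps)
  also have "\<dots> = fps_const (-2) * fps_X^2 * (lin (-1) * sq_prod m * lin (- of_nat (m+1)) * col_gf m)"
    unfolding factor col_gf_Suc by (simp add: ac_simps fps_numeral_fps_const)
  also have "\<dots> = fps_const ((-1)^(Suc m+1) * 2^(Suc m)) * fps_X^(2*Suc m+2)"
    unfolding Suc.IH const_X_power_mult by (simp add: ac_simps)
  finally show ?case .
qed

definition even_fps :: "rat fps \<Rightarrow> bool" where "even_fps g \<longleftrightarrow> (\<forall>n. odd n \<longrightarrow> g $ n = 0)"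

definition even_part :: "rat fps \<Rightarrow> rat fps" where
  "even_part f = Abs_fps (\<lambda>n. if even n then 2 * f $ n else 0)"

lemma even_part_mult:
  assumes g: "even_fps g"
  shows "even_part (f * g) = even_part f * g"
proof (rule fps_ext)
  fix n
  have "(even_part f * g) $ n = (\<Sum>i=0..n. even_part f $ i * g $ (n - i))" by (simp add: fps_mult_nth)
  also have "\<dots> = (\<Sum>i=0..n. if even n then 2 * (f $ i * g $ (n - i)) else 0)"
  proof (rule sum.cong[OF refl])
    fix i assume "i \<in> {0..n}"
    then have "even n \<Longrightarrow> odd i \<Longrightarrow> odd (n - i)" "odd n \<Longrightarrow> even i \<Longrightarrow> odd (n - i)" by auto
    then show "even_part f $ i * g $ (n - i) = (if even n then 2 * (f $ i * g $ (n - i)) else 0)"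
      using g by (auto simp: even_part_def even_fps_def)
  qed
  also have "\<dots> = even_part (f * g) $ n"
    by (simp add: even_part_def fps_mult_nth sum_distrib_left)
  finally show "even_part (f * g) $ n = (even_part f * g) $ n" by simp
qed

lemma even_fps_mult: "even_fps f \<Longrightarrow> even_fps g \<Longrightarrow> even_fps (f * g)"
  unfolding even_fps_def
proof (intro allI impI)
  fix n :: nat
  assume f: "\<forall>n. odd n \<longrightarrow> f $ n = 0" and g: "\<forall>n. odd n \<longrightarrow> g $ n = 0" and n: "odd n"
  have "f $ i * g $ (n - i) = 0" if "i \<in> {0..n}" for i
    using that n f g by (cases "even i") auto
  then have "(\<Sum>i=0..n. f $ i * g $ (n - i)) = 0" by (rule sum.neutral[OF ballI])
  then show "(f * g) $ n = 0" by (simp add: fps_mult_nth)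
qed

lemma even_fps_quad: "even_fps (quad a)"
  by (auto simp: even_fps_def quad_def)

lemma even_fps_sq_prod: "even_fps (sq_prod m)"
proof (induction m)
  case 0
  then show ?case by (simp add: sq_prod_def even_fps_def)
next
  case (Suc m)
  then show ?case unfolding sq_prod_Suc by (rule even_fps_mult[OF _ even_fps_quad])
qed

lemma even_fps_monomial: "even k \<Longrightarrow> even_fps (fps_const c * fps_X^k)"
  by (auto simp: even_fps_def)

lemma even_part_0: "even_part 0 = 0"
  by (rule fps_ext) (simp add: even_part_def)

lemma even_part_add: "even_part (f + g) = even_part f + even_part g"
  by (rule fps_ext) (simp add: even_part_def algebra_simps)

lemma even_part_const_mult: "even_part (fps_const c * f) = fps_const c * even_part f"
  by (rule fps_ext) (simp add: even_part_def algebra_simps)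

lemma even_part_lin_prod: "even_part (lin 1 * lin (of_nat (m+1))) = fps_const 2 * quad (of_nat (m+1))"
proof (rule fps_ext)
  fix n
  have "lin 1 * lin (of_nat (m+1)) =
      1 + fps_const (of_nat (m+2)) * fps_X + fps_const (of_nat (m+1)) * fps_X^2"
    unfolding lin_mult by (simp add: algebra_simps)
  then show "even_part (lin 1 * lin (of_nat (m+1))) $ n = (fps_const 2 * quad (of_nat (m+1))) $ n"
    by (auto simp: even_part_def quad_def)
qed

text \<open>
  Multiplying by the even series (1-X^2) sq_prod (m+1) clears all denominators of the
  column transform and leaves an even part with only two terms.
\<close>
lemma col_gf_even_part:
  "even_part (col_gf m) * (quad (-1) * sq_prod (Suc m)) =
   fps_const ((-1)^(m+1) * 2^m) * fps_X^(2*m+2) * (fps_const 2 * quad (of_nat (m+1)))"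
proof -
  have q1: "lin (-1) * lin 1 = quad (-1)" using lin_conj[of 1] by simp
  have "col_gf m * (quad (-1) * sq_prod (Suc m)) =
     (lin (-1) * sq_prod m * lin (- of_nat (m+1)) * col_gf m) * (lin 1 * lin (of_nat (m+1)))"
    unfolding sq_prod_Suc_lin q1[symmetric] by (simp add: ac_simps)
  also have "\<dots> = (lin 1 * lin (of_nat (m+1))) * (fps_const ((-1)^(m+1) * 2^m) * fps_X^(2*m+2))"
    unfolding col_gf_closed by (simp add: ac_simps)
  finally have prod: "col_gf m * (quad (-1) * sq_prod (Suc m)) =
      (lin 1 * lin (of_nat (m+1))) * (fps_const ((-1)^(m+1) * 2^m) * fps_X^(2*m+2))" .
  have "even_part (col_gf m) * (quad (-1) * sq_prod (Suc m)) =
      even_part (col_gf m * (quad (-1) * sq_prod (Suc m)))"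
    by (simp add: even_part_mult even_fps_mult even_fps_quad even_fps_sq_prod)
  also have "\<dots> = even_part (lin 1 * lin (of_nat (m+1))) * (fps_const ((-1)^(m+1) * 2^m) * fps_X^(2*m+2))"
    unfolding prod by (rule even_part_mult) (rule even_fps_monomial, simp)
  finally show ?thesis
    unfolding even_part_lin_prod by (simp add: ac_simps)
qed

text \<open>
  Partial sums \<Sum>_{m<K} P_m col_gf m of the transform of h, and the even remainder which
  the telescoping argument below shows to be O(X^{2K+2}).
\<close>
definition partial_gf :: "nat \<Rightarrow> rat fps" where
  "partial_gf K = (\<Sum>m<K. fps_const (tri_prod m) * col_gf m)"

definition even_remainder :: "nat \<Rightarrow> rat fps" where
  "even_remainder K = quad (-1) * even_part (partial_gf K) + fps_const 2 * fps_X^2"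

text \<open>P_m 2^m = m! (m+1)!, which fixes the leading coefficients in the telescoping step.\<close>
lemma tri_prod_fact: "tri_prod m * 2^m = fact m * (of_nat (m+1) * fact m)"
proof (induction m)
  case (Suc m)
  have "tri_prod (Suc m) * 2^(Suc m) = (tri_prod m * 2^m) * (2 * tri (Suc m))"
    by (simp add: tri_prod_def algebra_simps)
  also have "\<dots> = fact m * (of_nat (m+1) * fact m) * (of_nat (m+1) * of_nat (m+2))"
    using Suc by (simp add: tri_def field_simps)
  finally show ?case by (simp add: algebra_simps)
qed (simp add: tri_prod_def)

lemma const_X_power_quad:
  "fps_const a * fps_X^i * quad b = fps_const a * fps_X^i + fps_const (a*b) * fps_X^(i+2)"
proof -
  have "fps_const a * fps_X^i * quad b = fps_const a * fps_X^i + fps_const a * fps_X^i * (fps_const b * fps_X^2)"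
    by (simp add: quad_def algebra_simps)
  then show ?thesis unfolding const_X_power_mult by simp
qed

text \<open>
  The two coefficient identities of the telescoping step: with
  c_K = 2(-1)^K K!^2 (K+1) and the coefficient 2 P_K (-1)^{K+1} 2^K of the new term,
  the X^{2K+2} terms cancel and the X^{2K+4} terms combine to c_{K+1}.
\<close>
lemma telescoping_coeffs:
  fixes K :: nat
  defines "c \<equiv> 2 * (-1)^K * (fact K)^2 * of_nat (K+1) :: rat"
  defines "d \<equiv> tri_prod K * ((-1)^(K+1) * 2^K) * 2"
  shows "c + d = 0"
    and "c * - of_nat ((Suc K)^2) + d * of_nat (K+1) = 2 * (-1)^(Suc K) * (fact (Suc K))^2 * of_nat (Suc K+1)"
proof -
  have d: "d = (-1)^(K+1) * 2 * (fact K * (of_nat (K+1) * fact K))"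
    unfolding d_def tri_prod_fact[symmetric] by (simp add: algebra_simps)
  show "c + d = 0" unfolding c_def d by (simp add: algebra_simps power2_eq_square)
  show "c * - of_nat ((Suc K)^2) + d * of_nat (K+1) =
      2 * (-1)^(Suc K) * (fact (Suc K))^2 * of_nat (Suc K+1)"
    unfolding c_def d by (simp add: algebra_simps power2_eq_square)
qed

lemma even_remainder_telescope:
  "even_remainder K * sq_prod K = fps_const (2 * (-1)^K * (fact K)^2 * of_nat (K+1)) * fps_X^(2*K+2)"
proof (induction K)
  case 0
  have "even_remainder 0 = fps_const 2 * fps_X^2"
    by (simp add: even_remainder_def partial_gf_def even_part_0)
  moreover have "sq_prod 0 = 1" by (simp add: sq_prod_def)
  ultimately show ?case by (simp add: power2_eq_square)
next
  case (Suc K)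
  define i where "i = 2*K+2"
  define c :: rat where "c = 2 * (-1)^K * (fact K)^2 * of_nat (K+1)"
  define d :: rat where "d = tri_prod K * ((-1)^(K+1) * 2^K) * 2"
  have step: "even_remainder (Suc K) = even_remainder K + fps_const (tri_prod K) * (quad (-1) * even_part (col_gf K))"
    by (simp add: even_remainder_def partial_gf_def even_part_add even_part_const_mult distrib_left
        mult.left_commute add_ac)
  have "even_remainder (Suc K) * sq_prod (Suc K) = (even_remainder K * sq_prod K) * quad (- of_nat ((Suc K)^2)) +
      fps_const (tri_prod K) * (even_part (col_gf K) * (quad (-1) * sq_prod (Suc K)))"
    unfolding step by (simp add: sq_prod_Suc algebra_simps)
  also have "\<dots> = fps_const c * fps_X^i * quad (- of_nat ((Suc K)^2)) + fps_const d * fps_X^i * quad (of_nat (K+1))"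
    unfolding Suc.IH col_gf_even_part c_def d_def i_def by (simp add: ac_simps)
  also have "\<dots> = fps_const (c * - of_nat ((Suc K)^2) + d * of_nat (K+1)) * fps_X^(i+2)
      + fps_const (c + d) * fps_X^i"
    unfolding const_X_power_quad by (simp only: fps_const_add[symmetric] distrib_right add_ac)
  finally show ?case
    using telescoping_coeffs[of K] by (simp add: c_def d_def i_def)
qed

lemma coeff_below_monomial:
  assumes "f * g = fps_const c * fps_X^k" "g $ 0 \<noteq> 0" "n < k"
  shows "f $ n = (0::rat)"
proof -
  have "f = f * g * inverse g" using assms(2) by (simp add: mult.assoc inverse_mult_eq_1')
  also have "\<dots> = fps_const c * (fps_X^k * inverse g)" using assms(1) by (simp add: mult.assoc)
  finally show ?thesis using assms(3) by (simp add: fps_X_power_mult_nth)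
qed

lemma sq_prod_nth_0: "sq_prod K $ 0 = 1"
proof (induction K)
  case (Suc K)
  then show ?case by (simp add: sq_prod_Suc quad_def)
qed (simp add: sq_prod_def)

lemma partial_gf_even_coeff:
  assumes "j < K"
  shows "partial_gf K $ (2*j+2) = -1"
proof -
  define E where "E = even_part (partial_gf K)"
  have remainder_nth: "even_remainder K $ n = E $ n - (if n < 2 then 0 else E $ (n-2)) + (if n = 2 then 2 else 0)"
    for n
  proof -
    have "quad (-1) * E = E - fps_X^2 * E" by (simp add: quad_def fps_const_minus_one algebra_simps)
    then show ?thesis by (simp add: even_remainder_def E_def[symmetric] fps_X_power_mult_nth)
  qed
  have vanish: "even_remainder K $ n = 0" if "n < 2*K+2" for n
    using coeff_below_monomial[OF even_remainder_telescope] sq_prod_nth_0 that by simp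
  have "E $ 0 = 0" by (simp add: E_def even_part_def partial_gf_def fps_sum_nth col_gf_def subst_gf_nth_0)
  then have "j < K \<longrightarrow> E $ (2*j+2) = -2"
  proof (induction j)
    case 0
    then show ?case using vanish[of 2] remainder_nth[of 2] by (auto simp: numeral_2_eq_2 eq_neg_iff_add_eq_0)
  next
    case (Suc j)
    then show ?case using vanish[of "2*Suc j+2"] remainder_nth[of "2*Suc j+2"]
      by (auto simp: eq_neg_iff_add_eq_0)
  qed
  then show ?thesis using assms by (simp add: E_def even_part_def)
qed

definition hseq :: "nat \<Rightarrow> rat" where "hseq n = (\<Sum>m\<le>n. tri_prod m * bcoef n m)"

lemma hseq_eq_mcount: "hseq n = of_nat (mcount n 0)"
  by (simp add: mcount_expansion hseq_def)

text \<open>The scaled sequence 2^{p-1} h_{p-1}, shifted so that it can be compared with M_p.\<close>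
definition scaled_h :: "nat \<Rightarrow> rat" where
  "scaled_h p = (if p = 0 then 1 else 2^(p-1) * hseq (p-1))"

text \<open>Reading off the coefficient of X^{2n+2} in the transform of h gives its recurrence.\<close>
lemma scaled_h_recurrence:
  "(\<Sum>p\<le>2*n+2. (-1)^p * of_nat ((2*n+2-p) choose p) * scaled_h p) = 0"
proof -
  define N where "N = 2*n+2"
  define k where "k q = (-1)^(Suc q) * of_nat ((N - Suc q) choose (Suc q)) * (2::rat)^q" for q
  have inner: "(\<Sum>m<N. tri_prod m * bcoef q m) = hseq q" if "q < N" for q
  proof -
    have "(\<Sum>m<N. tri_prod m * bcoef q m) = (\<Sum>m\<le>q. tri_prod m * bcoef q m)"
      by (rule sum.mono_neutral_right) (use that in \<open>auto simp: bcoef_below\<close>)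
    then show ?thesis by (simp add: hseq_def)
  qed
  have "partial_gf N $ N = (\<Sum>m<N. tri_prod m * (\<Sum>q<N. k q * bcoef q m))"
    by (simp add: partial_gf_def fps_sum_nth col_gf_def subst_gf_def k_def)
  also have "\<dots> = (\<Sum>m<N. \<Sum>q<N. k q * (tri_prod m * bcoef q m))"
    by (simp add: sum_distrib_left ac_simps)
  also have "\<dots> = (\<Sum>q<N. \<Sum>m<N. k q * (tri_prod m * bcoef q m))"
    by (rule sum.swap)
  also have "\<dots> = (\<Sum>q<N. k q * (\<Sum>m<N. tri_prod m * bcoef q m))"
    by (simp add: sum_distrib_left)
  also have "\<dots> = (\<Sum>q<N. k q * hseq q)"
    by (intro sum.cong) (auto simp: inner)
  finally have A: "(\<Sum>q<N. k q * hseq q) = -1"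
    using partial_gf_even_coeff[of n N] by (simp add: N_def)
  define g where "g p = (-1)^p * of_nat ((N-p) choose p) * scaled_h p" for p
  have "(\<Sum>p\<le>N. g p) = g 0 + (\<Sum>q<N. g (Suc q))"
    by (simp only: lessThan_Suc_atMost[symmetric] sum.lessThan_Suc_shift)
  also have "\<dots> = 1 + (\<Sum>q<N. k q * hseq q)"
    by (simp add: g_def k_def scaled_h_def ac_simps)
  finally show ?thesis using A by (simp add: N_def g_def)
qed

lemma reflected_coeff:
  assumes "i \<le> n"
  shows "(-1)^(n-i) * (of_nat ((2*n+2 - (n-i)) choose (n-i)) :: rat)
       = (-1)^n * ((-1)^i * of_nat ((n+2+i) choose (2*i+2)))"
proof -
  have "(n+2+i) choose (n-i) = (n+2+i) choose ((n+2+i) - (n-i))"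
    by (rule binomial_symmetric) (use assms in simp)
  moreover have "(n+2+i) - (n-i) = 2*i+2" "2*n+2 - (n-i) = n+2+i" using assms by simp_all
  moreover have "(-1::rat)^(n-i) = (-1)^n * (-1)^i"
  proof -
    have "(-1::rat)^n = (-1)^(n-i) * (-1)^i" using assms by (simp add: power_add[symmetric])
    then have "(-1::rat)^n * (-1)^i = (-1)^(n-i) * ((-1)^i * (-1)^i)" by (simp add: mult.assoc)
    also have "(-1::rat)^i * (-1)^i = 1" by (simp add: power_add[symmetric] mult_2[symmetric])
    finally show ?thesis by simp
  qed
  ultimately show ?thesis by (simp only: mult.assoc)
qed

text \<open>
  Rewriting the recurrence of scaled_h in the form of the recurrence of M: the terms with
  p \<ge> n+2 vanish, and reflecting p = n - i puts the remaining ones in order.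
\<close>
lemma recurrence_reflect:
  fixes X :: "nat \<Rightarrow> rat"
  assumes rec: "(\<Sum>p\<le>2*n+2. (-1)^p * of_nat ((2*n+2-p) choose p) * X p) = 0"
  shows "X (n+1) = (\<Sum>i\<le>n. (-1)^i * of_nat ((n+2+i) choose (2*i+2)) * X (n-i))"
proof -
  define g where "g p = (-1)^p * of_nat ((2*n+2-p) choose p) * X p" for p
  define S where "S = (\<Sum>i\<le>n. (-1)^i * of_nat ((n+2+i) choose (2*i+2)) * X (n-i))"
  have "{..2*n+2} = {..n} \<union> {n+1} \<union> {n+2..2*n+2}" by auto
  then have "(\<Sum>p\<le>2*n+2. g p) = (\<Sum>p\<le>n. g p) + g (n+1) + (\<Sum>p\<in>{n+2..2*n+2}. g p)"
    by (simp add: sum.union_disjoint)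
  then have split: "(\<Sum>p\<le>n. g p) + g (n+1) + (\<Sum>p\<in>{n+2..2*n+2}. g p) = 0"
    using rec by (simp only: g_def)
  have high: "(\<Sum>p\<in>{n+2..2*n+2}. g p) = 0"
    by (intro sum.neutral) (auto simp: g_def binomial_eq_0)
  have mid: "g (n+1) = (-1)^(n+1) * X (n+1)" by (simp add: g_def)
  have low: "(\<Sum>p\<le>n. g p) = (-1)^n * S"
  proof -
    have "(\<Sum>p\<le>n. g p) = (\<Sum>i\<le>n. g (n - i))"
      using sum.nat_diff_reindex[of g "Suc n"] by (simp add: lessThan_Suc_atMost)
    also have "\<dots> = (-1)^n * S"
      unfolding S_def sum_distrib_left
    proof (rule sum.cong[OF refl])
      fix i assume "i \<in> {..n}"
      then have i: "i \<le> n" by simp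
      show "g (n - i) = (-1)^n * ((-1)^i * of_nat ((n+2+i) choose (2*i+2)) * X (n-i))"
        unfolding g_def reflected_coeff[OF i] by (simp only: mult.assoc)
    qed
    finally show ?thesis .
  qed
  have "(-1)^n * (S - X (n+1)) = 0"
    using split unfolding low mid high by (simp add: algebra_simps)
  then show ?thesis by (simp add: S_def)
qed

text \<open>scaled_h and M satisfy the same recurrence with the same initial value.\<close>
lemma scaled_h_eq_med: "scaled_h p = of_int (med p)"
proof (induction p rule: less_induct)
  case (less p)
  show ?case
  proof (cases p)
    case 0
    then show ?thesis by (simp add: scaled_h_def med_def)
  next
    case (Suc n)
    have "scaled_h (n+1) = (\<Sum>i\<le>n. (-1)^i * of_nat ((n+2+i) choose (2*i+2)) * scaled_h (n-i))"
      by (rule recurrence_reflect[OF scaled_h_recurrence])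
    also have "\<dots> = (\<Sum>i\<le>n. (-1)^i * of_nat ((n+2+i) choose (2*i+2)) * of_int (med (n-i)))"
      using less Suc by (intro sum.cong) auto
    also have "\<dots> = of_int (med (n+1))"
      unfolding med_recurrence[of n] by simp
    finally show ?thesis using Suc by simp
  qed
qed

lemma hnorm_eq_mcount: "hnorm n = of_nat (mcount n 0)"
proof -
  have "2^n * hseq n = of_int (med (n+1))"
    using scaled_h_eq_med[of "n+1"] by (simp add: scaled_h_def)
  then show ?thesis
    by (simp add: hnorm_def med_def median_genocchi_def hseq_eq_mcount[symmetric] field_simps)
qed

theorem corollary3p4:
  shows "(\<forall>n. hnorm n = of_nat (\<Sum>f\<in>motzkin n. \<Prod>k<n. wt (f k) (f (Suc k))))
         \<and> (\<lambda>N. cf 1 N) \<longlonglongrightarrow> Abs_fps hnorm"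
proof
  show "\<forall>n. hnorm n = of_nat (\<Sum>f\<in>motzkin n. \<Prod>k<n. wt (f k) (f (Suc k)))"
    using hnorm_eq_mcount path_sum_eq_mcount[of _ 0]
    by (simp add: motzkin_eq_motzkin_to path_weight_def)
  have gf: "Abs_fps hnorm = cf_tail 1"
    unfolding cf_tail_1 by (simp add: hnorm_eq_mcount[abs_def])
  show "(\<lambda>N. cf 1 N) \<longlonglongrightarrow> Abs_fps hnorm"
  proof (rule tendsto_fpsI)
    fix n
    have "\<forall>N\<ge>n. cf 1 N $ n = Abs_fps hnorm $ n"
      by (simp add: gf cf_nth_agree)
    then show "\<forall>\<^sub>F N in sequentially. cf 1 N $ n = Abs_fps hnorm $ n"
      unfolding eventually_sequentially by blast
  qed
qed

end
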